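(* Let $K$ be a field of characteristic $0$, $n\ge2$, and let $f=\sum_{i_1,\dots,i_n\ge0}a_{i_1,\dots,i_n}x_1^{i_1}\cdots x_n^{i_n}\in K[[x_1,\dots,x_n]]$ (not necessarily D-finite). Define $$\sigma(f)=\frac{1}{s_1\cdots s_{n-1}}\,f\Bigl(s_1,\frac{s_2}{s_1},\frac{s_3}{s_2},\dots,\frac{s_{n-1}}{s_{n-2}},\frac{t}{s_{n-1}}\Bigr),$$ a formal series in $s_1,\dots,s_{n-1}$ (integer exponents) and $t$ (non-negative exponents). Fix any lexicographical order on monomials in $D_{s_1},\dots,D_{s_{n-1}}$. Let $P\in(K[t]\langle D_t\rangle)[D_{s_1},\dots,D_{s_{n-1}}]$ be non-zero, let $D_{s_1}^{\alpha_1}\cdots D_{s_{n-1}}^{\alpha_{n-1}}$ be the smallest monomial occurring in $P$ with non-zero coefficient, and write $P=\tilde P(t;D_t)D_{s_1}^{\alpha_1}\cdots D_{s_{n-1}}^{\alpha_{n-1}}+(\text{terms with higher monomials})$ with $\tilde P\in K[t]\langle D_t\rangle$ non-zero. If $P(\sigma(f))=0$, then $\tilde P$ annihilates the complete diagonal $\Delta(f)=\sum_{i\ge0}a_{i,\dots,i}t^i$.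
   Context: Operators act on series in $s_1,\dots,s_{n-1},t$ by multiplication by $t$ and termwise differentiation $D_t=\partial/\partial t$, $D_{s_i}=\partial/\partial s_i$; coefficients in $K[t]\langle D_t\rangle$ are written to the left of monomials in the $D_{s_i}$. *)

theory Defs
  imports "HOL-Computational_Algebra.Computational_Algebra"
begin

text \<open>A formal series in s_1..s_(n-1) (integer exponents) and t (non-negative exponents),
  given by its coefficient function: F e k is the coefficient of s^e t^k,
  where e is the list of exponents of s_1,...,s_(n-1).\<close>
type_synonym 'a sseries = "int list \<Rightarrow> nat \<Rightarrow> 'a"

text \<open>The multivariate series f in K[[x_1..x_n]] is given by its coefficients
  a :: nat list => 'a (meaningful on lists of length n).
  sigma(f): the monomial x^i goes to s_1^(i_1-i_2-1) ... s_(n-1)^(i_(n-1)-i_n-1) t^(i_n);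
  this map is injective, with inverse i_n = k, i_j = k + sum_(l=j..n-1) (e_l + 1).\<close>
definition sigma_idx :: "nat \<Rightarrow> int list \<Rightarrow> nat \<Rightarrow> int list" where
  "sigma_idx n e k = map (\<lambda>j. int k + (\<Sum>l\<in>{j..<n-1}. e ! l + 1)) [0..<n]"

definition sigma :: "nat \<Rightarrow> (nat list \<Rightarrow> 'a::field) \<Rightarrow> 'a sseries" where
  "sigma n a e k =
     (if length e = n - 1 \<and> (\<forall>x\<in>set (sigma_idx n e k). 0 \<le> x)
      then a (map nat (sigma_idx n e k)) else 0)"

definition Ds :: "nat \<Rightarrow> 'a::ring_1 sseries \<Rightarrow> 'a sseries" where
  "Ds i F = (\<lambda>e k. of_int (e ! i + 1) * F (e[i := e ! i + 1]) k)"

definition Dt :: "'a::ring_1 sseries \<Rightarrow> 'a sseries" where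
  "Dt F = (\<lambda>e k. of_nat (Suc k) * F e (Suc k))"

definition Mt :: "'a::ring_1 sseries \<Rightarrow> 'a sseries" where
  "Mt F = (\<lambda>e k. if k = 0 then 0 else F e (k - 1))"

definition Ds_mono :: "nat list \<Rightarrow> 'a::ring_1 sseries \<Rightarrow> 'a sseries" where
  "Ds_mono \<beta> F = foldr (\<lambda>i G. (Ds i ^^ (\<beta> ! i)) G) [0..<length \<beta>] F"

definition Mpoly :: "'a::ring_1 poly \<Rightarrow> 'a sseries \<Rightarrow> 'a sseries" where
  "Mpoly p F = (\<lambda>e k. \<Sum>l\<le>degree p. coeff p l * (Mt ^^ l) F e k)"

text \<open>An operator P in (K[t]<D_t>)[D_s_1..D_s_(n-1)] is represented by
  P :: nat list => nat => 'a poly, where P beta j is the polynomial p(t) in the term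
  p(t) D_t^j D_s^beta (coefficients in K[t]<D_t> in normal form sum_j p_j(t) D_t^j,
  written to the left of the D_s monomials).  A Weyl algebra element
  W in K[t]<D_t> is represented by W :: nat => 'a poly (W j = coefficient of D_t^j).\<close>
definition op_supp :: "(nat list \<Rightarrow> nat \<Rightarrow> 'a::zero) \<Rightarrow> (nat list \<times> nat) set" where
  "op_supp P = {(\<beta>, j). P \<beta> j \<noteq> 0}"

definition mono_supp :: "(nat list \<Rightarrow> nat \<Rightarrow> 'a::zero) \<Rightarrow> nat list set" where
  "mono_supp P = {\<beta>. \<exists>j. P \<beta> j \<noteq> 0}"

definition apply_op :: "(nat list \<Rightarrow> nat \<Rightarrow> 'a::ring_1 poly) \<Rightarrow> 'a sseries \<Rightarrow> 'a sseries" where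
  "apply_op P F = (\<lambda>e k. \<Sum>(\<beta>, j)\<in>op_supp P. Mpoly (P \<beta> j) ((Dt ^^ j) (Ds_mono \<beta> F)) e k)"

definition weyl_apply :: "(nat \<Rightarrow> 'a::field_char_0 poly) \<Rightarrow> 'a fps \<Rightarrow> 'a fps" where
  "weyl_apply W g = (\<Sum>j\<in>{j. W j \<noteq> 0}. fps_of_poly (W j) * (fps_deriv ^^ j) g)"

definition diag :: "nat \<Rightarrow> (nat list \<Rightarrow> 'a) \<Rightarrow> 'a::zero fps" where
  "diag n a = Abs_fps (\<lambda>k. a (replicate n k))"

text \<open>Lexicographic order on exponent vectors of length m, with respect to the variable
  order given by the permutation pi of {0..<m} (pi 0 is the most significant variable).\<close>
definition lex_less :: "nat \<Rightarrow> (nat \<Rightarrow> nat) \<Rightarrow> nat list \<Rightarrow> nat list \<Rightarrow> bool" where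
  "lex_less m \<pi> \<alpha> \<beta> =
     (\<exists>i<m. (\<forall>j<i. \<alpha> ! (\<pi> j) = \<beta> ! (\<pi> j)) \<and> \<alpha> ! (\<pi> i) < \<beta> ! (\<pi> i))"

end

theory Submission
  imports Defs
begin

text \<open>Read off the coefficient of s^e with e_i = -1 - alpha_i, a power series in t.
  This extraction commutes with t and D_t, and turns D_s^beta into multiplication by the integer
  prod_i prod_(r=1..beta_i) (e_i + r), followed by reading off the coefficient of s^(e+beta).
  That integer vanishes as soon as beta_i > alpha_i for some i, which by lexicographic minimality
  of alpha happens for every other monomial of P; for beta = alpha it is non-zero, and
  s^(e+alpha) = (s_1 ... s_(n-1))^(-1), whose coefficient in sigma(f) is the diagonal.
  Hence 0 = c * P~(Delta(f)) with c a non-zero integer.\<close>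

definition s_coeff :: "int list \<Rightarrow> 'a::comm_ring_1 sseries \<Rightarrow> 'a fps" where
  "s_coeff e F = Abs_fps (F e)"

lemma s_coeff_Dt_pow: "s_coeff e ((Dt ^^ j) F) = (fps_deriv ^^ j) (s_coeff e F)"
  by (induction j) (simp_all add: s_coeff_def Dt_def fps_eq_iff)

lemma s_coeff_Mt_pow: "s_coeff e ((Mt ^^ l) F) = fps_X ^ l * s_coeff e F"
  by (induction l) (simp_all add: s_coeff_def Mt_def fps_eq_iff mult.assoc)

lemma s_coeff_Mpoly: "s_coeff e (Mpoly p F) = fps_of_poly p * s_coeff e F"
proof -
  have "s_coeff e (Mpoly p F) = (\<Sum>l\<le>degree p. fps_const (coeff p l) * s_coeff e ((Mt ^^ l) F))"
    by (simp add: Mpoly_def s_coeff_def fps_eq_iff fps_sum_nth)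
  also have "\<dots> = fps_of_poly (\<Sum>l\<le>degree p. monom (coeff p l) l) * s_coeff e F"
    by (simp add: s_coeff_Mt_pow fps_of_poly_sum fps_of_poly_monom sum_distrib_right mult.assoc)
  also have "\<dots> = fps_of_poly p * s_coeff e F"
    by (simp only: poly_as_sum_of_monoms)
  finally show ?thesis .
qed

lemma s_coeff_apply_op:
  "s_coeff e (apply_op P F) =
     (\<Sum>(\<beta>, j)\<in>op_supp P. fps_of_poly (P \<beta> j) * (fps_deriv ^^ j) (s_coeff e (Ds_mono \<beta> F)))"
proof -
  have "s_coeff e (apply_op P F) =
      (\<Sum>(\<beta>, j)\<in>op_supp P. s_coeff e (Mpoly (P \<beta> j) ((Dt ^^ j) (Ds_mono \<beta> F))))"
    by (simp add: apply_op_def s_coeff_def fps_eq_iff fps_sum_nth case_prod_beta)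
  then show ?thesis
    by (simp add: s_coeff_Mpoly s_coeff_Dt_pow)
qed

lemma weyl_apply_fps_const_mult:
  "weyl_apply W (fps_const c * g) = fps_const c * weyl_apply W g"
proof -
  have "(fps_deriv ^^ j) (fps_const c * g) = fps_const c * (fps_deriv ^^ j) g" for j
    by (induction j) simp_all
  then show ?thesis
    by (simp add: weyl_apply_def sum_distrib_left mult.left_commute)
qed

lemma s_coeff_apply_op_single_monomial:
  fixes P :: "nat list \<Rightarrow> nat \<Rightarrow> 'a::field_char_0 poly"
  assumes "finite (op_supp P)"
    and "\<And>\<beta>. \<beta> \<in> mono_supp P \<Longrightarrow> \<beta> \<noteq> \<alpha> \<Longrightarrow> s_coeff e (Ds_mono \<beta> F) = 0"
  shows "s_coeff e (apply_op P F) = weyl_apply (P \<alpha>) (s_coeff e (Ds_mono \<alpha> F))"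
proof -
  define g where "g \<beta> j = fps_of_poly (P \<beta> j) * (fps_deriv ^^ j) (s_coeff e (Ds_mono \<beta> F))"
    for \<beta> j
  have deriv_0: "(fps_deriv ^^ j) 0 = (0 :: 'a fps)" for j
    by (induction j) simp_all
  have "s_coeff e (apply_op P F) = (\<Sum>(\<beta>, j)\<in>op_supp P. g \<beta> j)"
    by (simp add: s_coeff_apply_op g_def)
  also have "\<dots> = (\<Sum>(\<beta>, j)\<in>Pair \<alpha> ` {j. P \<alpha> j \<noteq> 0}. g \<beta> j)"
  proof (rule sum.mono_neutral_right[OF assms(1)])
    have "g \<beta> j = 0" if "(\<beta>, j) \<in> op_supp P - Pair \<alpha> ` {j. P \<alpha> j \<noteq> 0}" for \<beta> j
    proof -
      from that have "\<beta> \<in> mono_supp P" "\<beta> \<noteq> \<alpha>"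
        by (auto simp: op_supp_def mono_supp_def)
      then show ?thesis
        by (simp add: g_def assms(2) deriv_0)
    qed
    then show "\<forall>x\<in>op_supp P - Pair \<alpha> ` {j. P \<alpha> j \<noteq> 0}. (case x of (\<beta>, j) \<Rightarrow> g \<beta> j) = 0"
      by auto
  qed (auto simp: op_supp_def)
  also have "\<dots> = (\<Sum>j | P \<alpha> j \<noteq> 0. g \<alpha> j)"
    by (simp add: sum.reindex inj_on_def)
  finally show ?thesis
    by (simp add: weyl_apply_def g_def)
qed

definition Ds_factor :: "nat list \<Rightarrow> int list \<Rightarrow> int" where
  "Ds_factor \<beta> e = (\<Prod>i<length \<beta>. \<Prod>r=1..\<beta> ! i. e ! i + int r)"

lemma Ds_pow_apply:
  fixes F :: "'a::comm_ring_1 sseries"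
  assumes "i < length e"
  shows "(Ds i ^^ m) F e k = of_int (\<Prod>r=1..m. e ! i + int r) * F (e[i := e ! i + int m]) k"
  using assms
proof (induction m arbitrary: F)
  case (Suc m)
  have "(Ds i ^^ Suc m) F e k = (Ds i ^^ m) (Ds i F) e k"
    by (simp only: funpow_Suc_right comp_apply)
  also have "\<dots> = of_int (\<Prod>r=1..m. e ! i + int r) * Ds i F (e[i := e ! i + int m]) k"
    using Suc by simp
  also have "\<dots> = of_int (\<Prod>r=1..Suc m. e ! i + int r) * F (e[i := e ! i + int (Suc m)]) k"
    using Suc.prems by (simp add: Ds_def prod.cl_ivl_Suc algebra_simps)
  finally show ?case .
qed simp

lemma foldr_Ds_pow_apply:
  fixes F :: "'a::comm_ring_1 sseries"
  assumes "distinct is" "\<forall>i\<in>set is. i < length e"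
  shows "foldr (\<lambda>i G. (Ds i ^^ m i) G) is F e k =
    of_int (\<Prod>i\<in>set is. \<Prod>r=1..m i. e ! i + int r) *
    F (map (\<lambda>j. if j \<in> set is then e ! j + int (m j) else e ! j) [0..<length e]) k"
  using assms
proof (induction "is" arbitrary: e)
  case Nil
  then show ?case
    by (simp add: map_nth)
next
  case (Cons i "is")
  define e' where "e' = e[i := e ! i + int (m i)]"
  have e'_nth: "e' ! j = (if j = i then e ! i + int (m i) else e ! j)" if "j < length e" for j
    using that Cons.prems by (simp add: e'_def)
  have "foldr (\<lambda>i G. (Ds i ^^ m i) G) (i # is) F e k =
      of_int (\<Prod>r=1..m i. e ! i + int r) * foldr (\<lambda>i G. (Ds i ^^ m i) G) is F e' k"
    using Cons.prems by (simp add: Ds_pow_apply e'_def)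
  also have "foldr (\<lambda>i G. (Ds i ^^ m i) G) is F e' k =
      of_int (\<Prod>i\<in>set is. \<Prod>r=1..m i. e' ! i + int r) *
      F (map (\<lambda>j. if j \<in> set is then e' ! j + int (m j) else e' ! j) [0..<length e']) k"
    using Cons.prems by (intro Cons.IH) (auto simp: e'_def)
  also have "(\<Prod>i\<in>set is. \<Prod>r=1..m i. e' ! i + int r) = (\<Prod>i\<in>set is. \<Prod>r=1..m i. e ! i + int r)"
    using Cons.prems by (intro prod.cong) (auto simp: e'_nth)
  also have "map (\<lambda>j. if j \<in> set is then e' ! j + int (m j) else e' ! j) [0..<length e'] =
      map (\<lambda>j. if j \<in> set (i # is) then e ! j + int (m j) else e ! j) [0..<length e]"
    using Cons.prems by (auto simp: e'_def nth_list_update)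
  finally show ?case
    using Cons.prems by (simp del: of_int_prod add: algebra_simps)
qed

lemma Ds_mono_apply:
  fixes F :: "'a::comm_ring_1 sseries"
  assumes "length e = length \<beta>"
  shows "Ds_mono \<beta> F e k = of_int (Ds_factor \<beta> e) * F (map (\<lambda>j. e ! j + int (\<beta> ! j)) [0..<length e]) k"
proof -
  have "Ds_mono \<beta> F e k = of_int (Ds_factor \<beta> e) *
      F (map (\<lambda>j. if j \<in> set [0..<length \<beta>] then e ! j + int (\<beta> ! j) else e ! j) [0..<length e]) k"
    unfolding Ds_mono_def Ds_factor_def
    using assms by (subst foldr_Ds_pow_apply) (auto simp: atLeast0LessThan)
  also have "map (\<lambda>j. if j \<in> set [0..<length \<beta>] then e ! j + int (\<beta> ! j) else e ! j) [0..<length e] =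
      map (\<lambda>j. e ! j + int (\<beta> ! j)) [0..<length e]"
    using assms by auto
  finally show ?thesis .
qed

lemma Ds_factor_eq_0_iff:
  "Ds_factor \<beta> e = 0 \<longleftrightarrow> (\<exists>i<length \<beta>. - int (\<beta> ! i) \<le> e ! i \<and> e ! i < 0)"
proof -
  have "(\<exists>r\<in>{1..m}. x + int r = 0) \<longleftrightarrow> - int m \<le> x \<and> x < 0" for x :: int and m
  proof
    assume "- int m \<le> x \<and> x < 0"
    then show "\<exists>r\<in>{1..m}. x + int r = 0"
      by (intro bexI[of _ "nat (- x)"]) auto
  qed auto
  then show ?thesis
    by (auto simp: Ds_factor_def prod_zero_iff)
qed

lemma s_coeff_Ds_mono:
  assumes "length e = length \<beta>"
  shows "s_coeff e (Ds_mono \<beta> F) =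
    fps_const (of_int (Ds_factor \<beta> e)) * s_coeff (map (\<lambda>j. e ! j + int (\<beta> ! j)) [0..<length e]) F"
  using assms by (simp add: s_coeff_def fps_eq_iff Ds_mono_apply)

lemma s_coeff_sigma_diagonal: "s_coeff (replicate (n - 1) (-1)) (sigma n a) = diag n a"
proof -
  have "sigma_idx n (replicate (n - 1) (-1)) k = replicate n (int k)" for k
    by (rule nth_equalityI) (simp_all add: sigma_idx_def)
  then show ?thesis
    by (simp add: s_coeff_def diag_def sigma_def fps_eq_iff)
qed

definition pole_exponent :: "nat list \<Rightarrow> int list" where
  "pole_exponent \<alpha> = map (\<lambda>i. - 1 - int (\<alpha> ! i)) [0..<length \<alpha>]"

lemma length_pole_exponent [simp]: "length (pole_exponent \<alpha>) = length \<alpha>"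
  by (simp add: pole_exponent_def)

lemma Ds_factor_pole_exponent_eq_0_iff:
  assumes "length \<beta> = length \<alpha>"
  shows "Ds_factor \<beta> (pole_exponent \<alpha>) = 0 \<longleftrightarrow> (\<exists>i<length \<alpha>. \<alpha> ! i < \<beta> ! i)"
  using assms by (auto simp: Ds_factor_eq_0_iff pole_exponent_def)

lemma s_coeff_Ds_mono_pole_exponent:
  "s_coeff (pole_exponent \<alpha>) (Ds_mono \<alpha> F) =
    fps_const (of_int (Ds_factor \<alpha> (pole_exponent \<alpha>))) * s_coeff (replicate (length \<alpha>) (-1)) F"
proof -
  have "map (\<lambda>j. pole_exponent \<alpha> ! j + int (\<alpha> ! j)) [0..<length \<alpha>] = replicate (length \<alpha>) (-1)"
    by (rule nth_equalityI) (simp_all add: pole_exponent_def)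
  then show ?thesis
    by (simp add: s_coeff_Ds_mono)
qed

lemma lex_less_imp_ex_less:
  assumes "lex_less m \<pi> \<alpha> \<beta>" "\<pi> ` {..<m} \<subseteq> {..<m}"
  shows "\<exists>i<m. \<alpha> ! i < \<beta> ! i"
  using assms unfolding lex_less_def by blast

theorem lemma4p14:
  fixes n :: nat and a :: "nat list \<Rightarrow> 'a::field_char_0"
    and P :: "nat list \<Rightarrow> nat \<Rightarrow> 'a poly" and \<pi> :: "nat \<Rightarrow> nat" and \<alpha> :: "nat list"
  assumes "n \<ge> 2"
    and "bij_betw \<pi> {..<n-1} {..<n-1}"
    and "finite (op_supp P)"
    and "\<forall>\<beta>\<in>mono_supp P. length \<beta> = n - 1"
    and "\<alpha> \<in> mono_supp P"
    and "\<forall>\<beta>\<in>mono_supp P. \<beta> \<noteq> \<alpha> \<longrightarrow> lex_less (n - 1) \<pi> \<alpha> \<beta>"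
    and "apply_op P (sigma n a) = (\<lambda>e k. 0)"
  shows "weyl_apply (P \<alpha>) (diag n a) = 0"
proof -
  define e where "e = pole_exponent \<alpha>"
  have len_\<alpha>: "length \<alpha> = n - 1"
    using assms(4,5) by blast
  have other_monomials_vanish: "s_coeff e (Ds_mono \<beta> (sigma n a)) = 0"
    if \<beta>: "\<beta> \<in> mono_supp P" "\<beta> \<noteq> \<alpha>" for \<beta>
  proof -
    have "length \<beta> = length \<alpha>"
      using assms(4) \<beta> len_\<alpha> by simp
    moreover have "\<exists>i<length \<alpha>. \<alpha> ! i < \<beta> ! i"
      using lex_less_imp_ex_less[of "n - 1" \<pi> \<alpha> \<beta>] assms(2,6) \<beta> len_\<alpha>
      by (simp add: bij_betw_imp_surj_on)
    ultimately show ?thesis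
      by (simp add: e_def s_coeff_Ds_mono Ds_factor_pole_exponent_eq_0_iff)
  qed
  have "s_coeff e (Ds_mono \<alpha> (sigma n a)) = fps_const (of_int (Ds_factor \<alpha> e)) * diag n a"
    using s_coeff_Ds_mono_pole_exponent[of \<alpha> "sigma n a"] s_coeff_sigma_diagonal[of n a]
    by (simp add: e_def len_\<alpha>)
  moreover have "Ds_factor \<alpha> e \<noteq> 0"
    by (simp add: e_def Ds_factor_pole_exponent_eq_0_iff)
  moreover have "s_coeff e (apply_op P (sigma n a)) = 0"
    using assms(7) by (simp add: s_coeff_def fps_zero_def)
  ultimately show ?thesis
    using s_coeff_apply_op_single_monomial[OF assms(3) other_monomials_vanish]
    by (simp add: weyl_apply_fps_const_mult)
qed

end
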